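(* Let $\frac12<p_0<p_1\le\infty$, $\frac12\le q_0,q_1\le\infty$ with $\frac1{p_0}-\frac1{p_1}=\frac1{q_0}-\frac1{q_1}=\mu>0$. Let $T$ be a sublinear operator on $\mathbb R$ mapping Schwartz functions to locally integrable functions with $\|Tg\|_{L^{q_j,\infty}}\le K_j\|g\|_{L^{p_j}}$ for $j=0,1$. Then for all $0<\vartheta<1$, $$\|Tg\|_{L^{q(\vartheta),\infty}}\le C K_0^{1-\vartheta}K_1^{\vartheta}\|g\|_{L^{p(\vartheta)}},\quad\frac1{p(\vartheta)}=\frac{1-\vartheta}{p_0}+\frac\vartheta{p_1},\ \frac1{q(\vartheta)}=\frac{1-\vartheta}{q_0}+\frac\vartheta{q_1},$$ where $C$ does not depend on $\vartheta$, $K_0$, $K_1$ or $g$.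
   Context: $L^{q,\infty}$ denotes weak $L^q$ with quasinorm $\sup_{t>0}t^{1/q}f^\star(t)$, $f^\star$ the decreasing rearrangement. *)

theory Defs
  imports "HOL-Analysis.Analysis"
begin

definition schwartz :: "(real \<Rightarrow> complex) \<Rightarrow> bool" where
  "schwartz f \<longleftrightarrow> (\<exists>D :: nat \<Rightarrow> real \<Rightarrow> complex.
      D 0 = f \<and>
      (\<forall>n x. (D n has_vector_derivative D (Suc n) x) (at x)) \<and>
      (\<forall>n k. \<exists>B. \<forall>x. \<bar>x\<bar> ^ k * norm (D n x) \<le> B))"

text \<open>Reciprocal 1/p of an exponent p in (0,\<infinity>], with 1/\<infinity> = 0.\<close>
definition recip :: "ennreal \<Rightarrow> real" where
  "recip p = enn2real (inverse p)"

definition Lp_norm :: "(real \<Rightarrow> complex) \<Rightarrow> ennreal \<Rightarrow> ennreal" where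
  "Lp_norm f p =
     (if p = \<infinity> then Inf {C :: ennreal. AE x in lebesgue. ennreal (norm (f x)) \<le> C}
      else (let I = (\<integral>\<^sup>+ x. ennreal (norm (f x) powr enn2real p) \<partial>lebesgue)
            in if I = \<infinity> then \<infinity> else ennreal (enn2real I powr (1 / enn2real p))))"

definition distrib_fun :: "(real \<Rightarrow> complex) \<Rightarrow> ennreal \<Rightarrow> ennreal" where
  "distrib_fun f s = emeasure lebesgue {x. s < ennreal (norm (f x))}"

definition rearrangement :: "(real \<Rightarrow> complex) \<Rightarrow> real \<Rightarrow> ennreal" where
  "rearrangement f t = Inf {s :: ennreal. distrib_fun f s \<le> ennreal t}"

definition weak_norm :: "(real \<Rightarrow> complex) \<Rightarrow> ennreal \<Rightarrow> ennreal" where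
  "weak_norm f q = (SUP t \<in> {0<..}. ennreal (t powr recip q) * rearrangement f t)"

definition locally_integrable :: "(real \<Rightarrow> complex) \<Rightarrow> bool" where
  "locally_integrable f \<longleftrightarrow> (\<forall>K. compact K \<longrightarrow> set_integrable lebesgue K f)"

definition sublinear_op :: "((real \<Rightarrow> complex) \<Rightarrow> (real \<Rightarrow> complex)) \<Rightarrow> bool" where
  "sublinear_op T \<longleftrightarrow>
     (\<forall>f g. schwartz f \<longrightarrow> schwartz g \<longrightarrow>
        (AE x in lebesgue. norm (T (\<lambda>y. f y + g y) x) \<le> norm (T f x) + norm (T g x))) \<and>
     (\<forall>f c. schwartz f \<longrightarrow>
        (AE x in lebesgue. norm (T (\<lambda>y. c * f y) x) = norm c * norm (T f x)))"

end

theory Submission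
  imports Defs
begin

text \<open>
  Write a_j = 1/p_j, b_j = 1/q_j, a = 1/p(\<theta>) and
  b = 1/q(\<theta>), and let I = \<integral> |g|^{1/a}. For a level s > 0 we split g at a height \<lambda> into
  a smooth low part g / (1 + (|g|/\<lambda>)^{2N}) and the remaining high part. Both parts are again
  Schwartz functions; the high part has L^{p0} norm at most \<lambda>^{1 - a0/a} I^{a0} and the low
  part L^{p1} norm at most \<lambda>^{1 - a1/a} I^{a1}. By sublinearity
  |{|Tg| > s}| \<le> |{|T g_high| > s/2}| + |{|T g_low| > s/2}|, and each term is bounded by
  the weak-type hypotheses. Choosing \<lambda> to balance the two terms gives
  |{|Tg| > s}| \<le> (C K0^{1-\<theta>} K1^\<theta> I^a / s)^{1/b} with C = 2 \<cdot> 4^{1 + 1/\<mu>},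
  which is the weak-type bound.
\<close>

text \<open>
  Smooth functions whose every derivative satisfies a predicate A, defined coinductively:
  f qualifies if A f holds and f has a derivative that again qualifies.
\<close>
coinductive smooth_with :: "((real \<Rightarrow> complex) \<Rightarrow> bool) \<Rightarrow> (real \<Rightarrow> complex) \<Rightarrow> bool"
  for A where
  smooth_withI: "A f \<Longrightarrow> (\<And>x. (f has_vector_derivative f' x) (at x)) \<Longrightarrow> smooth_with A f'
    \<Longrightarrow> smooth_with A f"

lemma smooth_with_invariant:
  assumes "P f"
    and step: "\<And>f. P f \<Longrightarrow> A f \<and> (\<exists>f'. (\<forall>x. (f has_vector_derivative f' x) (at x)) \<and> P f')"
  shows "smooth_with A f"
  using assms(1)
proof (coinduction arbitrary: f rule: smooth_with.coinduct)
  case smooth_with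
  then show ?case using step by blast
qed

definition sderiv :: "((real \<Rightarrow> complex) \<Rightarrow> bool) \<Rightarrow> (real \<Rightarrow> complex) \<Rightarrow> real \<Rightarrow> complex" where
  "sderiv A f = (SOME f'. (\<forall>x. (f has_vector_derivative f' x) (at x)) \<and> smooth_with A f')"

lemma smooth_withD:
  assumes "smooth_with A f"
  shows "A f" "\<And>x. (f has_vector_derivative sderiv A f x) (at x)" "smooth_with A (sderiv A f)"
proof -
  from assms obtain f' where "A f" "\<forall>x. (f has_vector_derivative f' x) (at x)" "smooth_with A f'"
    by (cases rule: smooth_with.cases) auto
  then have ex: "\<exists>f'. (\<forall>x. (f has_vector_derivative f' x) (at x)) \<and> smooth_with A f'" by blast
  show "A f" by fact
  from someI_ex[OF ex] show "\<And>x. (f has_vector_derivative sderiv A f x) (at x)"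
    "smooth_with A (sderiv A f)"
    unfolding sderiv_def by auto
qed

fun sderivs :: "((real \<Rightarrow> complex) \<Rightarrow> bool) \<Rightarrow> (real \<Rightarrow> complex) \<Rightarrow> nat \<Rightarrow> real \<Rightarrow> complex" where
  "sderivs A f 0 = f"
| "sderivs A f (Suc n) = sderiv A (sderivs A f n)"

lemma smooth_with_sderivs: "smooth_with A f \<Longrightarrow> smooth_with A (sderivs A f n)"
  by (induction n) (auto dest: smooth_withD)

lemma smooth_with_mono: "smooth_with A f \<Longrightarrow> (\<And>h. A h \<Longrightarrow> B h) \<Longrightarrow> smooth_with B f"
  by (rule smooth_with_invariant[where P = "smooth_with A"]) (auto dest: smooth_withD)

definition rapid_decay :: "(real \<Rightarrow> complex) \<Rightarrow> bool" where
  "rapid_decay h \<longleftrightarrow> (\<forall>k::nat. \<exists>B. \<forall>x. \<bar>x\<bar> ^ k * norm (h x) \<le> B)"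

definition bounded_fn :: "(real \<Rightarrow> complex) \<Rightarrow> bool" where
  "bounded_fn h \<longleftrightarrow> (\<exists>B. \<forall>x. norm (h x) \<le> B)"

lemma schwartz_iff_smooth_rapid: "schwartz f \<longleftrightarrow> smooth_with rapid_decay f"
proof
  assume "schwartz f"
  then obtain D where D: "D 0 = f" "\<And>n x. (D n has_vector_derivative D (Suc n) x) (at x)"
    "\<And>n k. \<exists>B. \<forall>x. \<bar>x\<bar> ^ k * norm (D n x) \<le> B"
    unfolding schwartz_def by blast
  have "smooth_with rapid_decay (D n)" for n
    by (rule smooth_with_invariant[where P = "\<lambda>h. \<exists>n. h = D n"]) (use D in \<open>auto simp: rapid_decay_def\<close>)
  then show "smooth_with rapid_decay f" using D(1) by metis
next
  assume f: "smooth_with rapid_decay f"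
  show "schwartz f"
    unfolding schwartz_def
  proof (intro exI[of _ "sderivs rapid_decay f"] conjI allI)
    fix n k x
    show "(sderivs rapid_decay f n has_vector_derivative sderivs rapid_decay f (Suc n) x) (at x)"
      using smooth_withD(2)[OF smooth_with_sderivs[OF f]] by simp
    show "\<exists>B. \<forall>x. \<bar>x\<bar> ^ k * norm (sderivs rapid_decay f n x) \<le> B"
      using smooth_withD(1)[OF smooth_with_sderivs[OF f]] by (auto simp: rapid_decay_def)
  qed simp
qed

lemma rapid_decay_bounded: "rapid_decay h \<Longrightarrow> bounded_fn h"
  unfolding rapid_decay_def bounded_fn_def by (metis mult_1 power_0)

text \<open>Finite sums of products f \<cdot> h; they are closed under differentiation (Leibniz rule).\<close>
definition sum_products :: "((real \<Rightarrow> complex) \<times> (real \<Rightarrow> complex)) list \<Rightarrow> real \<Rightarrow> complex" where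
  "sum_products L x = (\<Sum>(f, h) \<leftarrow> L. f x * h x)"

lemma sum_products_simps [simp]:
  "sum_products [] x = 0" "sum_products ((f, h) # L) x = f x * h x + sum_products L x"
  by (auto simp: sum_products_def)

definition deriv_products ::
    "((real \<Rightarrow> complex) \<Rightarrow> bool) \<Rightarrow> ((real \<Rightarrow> complex) \<Rightarrow> bool)
      \<Rightarrow> ((real \<Rightarrow> complex) \<times> (real \<Rightarrow> complex)) list
      \<Rightarrow> ((real \<Rightarrow> complex) \<times> (real \<Rightarrow> complex)) list" where
  "deriv_products A B L = concat (map (\<lambda>(f, h). [(sderiv A f, h), (f, sderiv B h)]) L)"

lemma deriv_products_simps [simp]:
  "deriv_products A B [] = []"
  "deriv_products A B ((f, h) # L) = (sderiv A f, h) # (f, sderiv B h) # deriv_products A B L"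
  by (auto simp: deriv_products_def)

lemma sum_products_deriv:
  "\<forall>(f, h) \<in> set L. smooth_with A f \<and> smooth_with B h \<Longrightarrow>
    (sum_products L has_vector_derivative sum_products (deriv_products A B L) x) (at x)"
proof (induction L)
  case (Cons fh L)
  obtain f h where fh: "fh = (f, h)" by force
  have f: "(f has_vector_derivative sderiv A f x) (at x)"
    and h: "(h has_vector_derivative sderiv B h x) (at x)"
    using Cons.prems fh smooth_withD(2) by auto
  have "((\<lambda>x. f x * h x + sum_products L x) has_vector_derivative
      (f x * sderiv B h x + sderiv A f x * h x) + sum_products (deriv_products A B L) x) (at x)"
    using Cons by (intro has_vector_derivative_add has_vector_derivative_mult f h) auto
  then show ?case using fh by (simp add: algebra_simps)
qed (simp add: sum_products_def[abs_def])

lemma deriv_products_smooth: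
  "\<forall>(f, h) \<in> set L. smooth_with A f \<and> smooth_with B h \<Longrightarrow>
    \<forall>(f, h) \<in> set (deriv_products A B L). smooth_with A f \<and> smooth_with B h"
  by (induction L) (auto dest: smooth_withD)

lemma smooth_with_mult:
  assumes mult: "\<And>f h. A f \<Longrightarrow> B h \<Longrightarrow> C (\<lambda>x. f x * h x)" and zero: "C (\<lambda>x. 0)"
    and add: "\<And>f g. C f \<Longrightarrow> C g \<Longrightarrow> C (\<lambda>x. f x + g x)"
    and f: "smooth_with A f" and h: "smooth_with B h"
  shows "smooth_with C (\<lambda>x. f x * h x)"
proof -
  let ?P = "\<lambda>F. \<exists>L. F = sum_products L \<and> (\<forall>(f, h) \<in> set L. smooth_with A f \<and> smooth_with B h)"
  have in_C: "C (sum_products L)" if "\<forall>(f, h) \<in> set L. smooth_with A f \<and> smooth_with B h" for L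
    using that
  proof (induction L)
    case (Cons fh L)
    obtain f h where fh: "fh = (f, h)" by force
    then have "C (\<lambda>x. f x * h x)" using Cons.prems mult smooth_withD(1) by auto
    then show ?case using Cons fh add by simp
  qed (simp add: zero sum_products_def[abs_def])
  have "?P (\<lambda>x. f x * h x)"
    using f h by (intro exI[of _ "[(f, h)]"]) (auto simp: fun_eq_iff)
  then show ?thesis
    by (rule smooth_with_invariant) (use in_C sum_products_deriv deriv_products_smooth in blast)
qed

lemma smooth_with_add:
  assumes add: "\<And>f g. A f \<Longrightarrow> A g \<Longrightarrow> A (\<lambda>x. f x + g x)"
    and "smooth_with A f" "smooth_with A g"
  shows "smooth_with A (\<lambda>x. f x + g x)"
proof (rule smooth_with_invariant[where P = "\<lambda>F. \<exists>f g. F = (\<lambda>x. f x + g x) \<and> smooth_with A f \<and> smooth_with A g"])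
  fix F assume "\<exists>f g. F = (\<lambda>x. f x + g x) \<and> smooth_with A f \<and> smooth_with A g"
  then obtain f g where F: "F = (\<lambda>x. f x + g x)" and f: "smooth_with A f" and g: "smooth_with A g"
    by blast
  have "\<forall>x. (F has_vector_derivative sderiv A f x + sderiv A g x) (at x)"
    unfolding F using smooth_withD(2)[OF f] smooth_withD(2)[OF g] by (intro allI has_vector_derivative_add)
  moreover have "A F" unfolding F by (rule add[OF smooth_withD(1)[OF f] smooth_withD(1)[OF g]])
  moreover have "smooth_with A (sderiv A f)" "smooth_with A (sderiv A g)"
    using smooth_withD(3)[OF f] smooth_withD(3)[OF g] by simp_all
  ultimately show "A F \<and> (\<exists>F'. (\<forall>x. (F has_vector_derivative F' x) (at x)) \<and>
      (\<exists>f g. F' = (\<lambda>x. f x + g x) \<and> smooth_with A f \<and> smooth_with A g))"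
    by (intro conjI exI[of _ "\<lambda>x. sderiv A f x + sderiv A g x"] exI[of _ "sderiv A f"]
        exI[of _ "sderiv A g"]) simp_all
next
  show "\<exists>f' g'. (\<lambda>x. f x + g x) = (\<lambda>x. f' x + g' x) \<and> smooth_with A f' \<and> smooth_with A g'"
    using assms(2,3) by blast
qed

lemma smooth_with_const: "(\<And>c. A (\<lambda>x. c)) \<Longrightarrow> smooth_with A (\<lambda>x. c)"
  by (rule smooth_with_invariant[where P = "\<lambda>F. \<exists>c. F = (\<lambda>x. c)"]) (auto intro!: exI[of _ "\<lambda>x. 0"])

lemma smooth_with_cnj:
  assumes cnj: "\<And>f. A f \<Longrightarrow> A (\<lambda>x. cnj (f x))" and "smooth_with A f"
  shows "smooth_with A (\<lambda>x. cnj (f x))"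
proof (rule smooth_with_invariant[where P = "\<lambda>F. \<exists>f. F = (\<lambda>x. cnj (f x)) \<and> smooth_with A f"])
  fix F assume "\<exists>f. F = (\<lambda>x. cnj (f x)) \<and> smooth_with A f"
  then obtain f where F: "F = (\<lambda>x. cnj (f x))" and f: "smooth_with A f" by blast
  have "\<forall>x. (F has_vector_derivative cnj (sderiv A f x)) (at x)"
    unfolding F using smooth_withD(2)[OF f] by (blast intro: has_vector_derivative_cnj)
  then show "A F \<and> (\<exists>F'. (\<forall>x. (F has_vector_derivative F' x) (at x)) \<and>
      (\<exists>f. F' = (\<lambda>x. cnj (f x)) \<and> smooth_with A f))"
    using cnj[OF smooth_withD(1)[OF f]] smooth_withD(3)[OF f] unfolding F
    by (intro conjI exI[of _ "\<lambda>x. cnj (sderiv A f x)"] exI[of _ "sderiv A f"]) simp_all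
qed (use assms in blast)

lemma bounded_fn_mult: "bounded_fn f \<Longrightarrow> bounded_fn h \<Longrightarrow> bounded_fn (\<lambda>x. f x * h x)"
  unfolding bounded_fn_def norm_mult by (meson mult_mono norm_ge_zero order.trans)

lemma bounded_fn_add: "bounded_fn f \<Longrightarrow> bounded_fn h \<Longrightarrow> bounded_fn (\<lambda>x. f x + h x)"
  unfolding bounded_fn_def by (meson add_mono norm_triangle_ineq order.trans)

lemma bounded_fn_const: "bounded_fn (\<lambda>x. c)"
  unfolding bounded_fn_def by (rule exI[of _ "norm c"]) simp

lemma rapid_decay_zero: "rapid_decay (\<lambda>x. 0)"
  unfolding rapid_decay_def by (intro allI exI[of _ 0]) simp

lemma rapid_decay_mult: "rapid_decay f \<Longrightarrow> bounded_fn h \<Longrightarrow> rapid_decay (\<lambda>x. f x * h x)"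
  unfolding rapid_decay_def bounded_fn_def
proof (intro allI)
  fix k :: nat
  assume "\<forall>k. \<exists>B. \<forall>x. \<bar>x\<bar> ^ k * norm (f x) \<le> B" "\<exists>B. \<forall>x. norm (h x) \<le> B"
  then obtain B1 B2 where 1: "\<forall>x. \<bar>x\<bar> ^ k * norm (f x) \<le> B1" and 2: "\<forall>x. norm (h x) \<le> B2"
    by blast
  have "\<bar>x\<bar> ^ k * norm (f x * h x) \<le> B1 * B2" for x
    using 1 2 unfolding norm_mult mult.assoc[symmetric]
    by (meson mult_mono mult_nonneg_nonneg norm_ge_zero order.trans zero_le_power abs_ge_zero)
  then show "\<exists>B. \<forall>x. \<bar>x\<bar> ^ k * norm (f x * h x) \<le> B" by blast
qed

lemma rapid_decay_add: "rapid_decay f \<Longrightarrow> rapid_decay h \<Longrightarrow> rapid_decay (\<lambda>x. f x + h x)"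
  unfolding rapid_decay_def
proof (intro allI)
  fix k :: nat
  assume "\<forall>k. \<exists>B. \<forall>x. \<bar>x\<bar> ^ k * norm (f x) \<le> B" "\<forall>k. \<exists>B. \<forall>x. \<bar>x\<bar> ^ k * norm (h x) \<le> B"
  then obtain B1 B2 where 1: "\<forall>x. \<bar>x\<bar> ^ k * norm (f x) \<le> B1"
    and 2: "\<forall>x. \<bar>x\<bar> ^ k * norm (h x) \<le> B2"
    by blast
  have "\<bar>x\<bar> ^ k * norm (f x + h x) \<le> B1 + B2" for x
  proof -
    have "\<bar>x\<bar> ^ k * norm (f x + h x) \<le> \<bar>x\<bar> ^ k * norm (f x) + \<bar>x\<bar> ^ k * norm (h x)"
      by (metis distrib_left mult_left_mono norm_triangle_ineq zero_le_power abs_ge_zero)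
    then show ?thesis using 1 2 by (meson add_mono order.trans)
  qed
  then show "\<exists>B. \<forall>x. \<bar>x\<bar> ^ k * norm (f x + h x) \<le> B" by blast
qed

lemma schwartz_mult_bounded:
  "schwartz f \<Longrightarrow> smooth_with bounded_fn h \<Longrightarrow> schwartz (\<lambda>x. f x * h x)"
  unfolding schwartz_iff_smooth_rapid
  by (rule smooth_with_mult[of rapid_decay bounded_fn])
    (auto intro: rapid_decay_mult rapid_decay_add rapid_decay_zero)

lemma smooth_bounded_mult:
  "smooth_with bounded_fn f \<Longrightarrow> smooth_with bounded_fn h \<Longrightarrow> smooth_with bounded_fn (\<lambda>x. f x * h x)"
  by (rule smooth_with_mult[of bounded_fn bounded_fn]) (auto intro: bounded_fn_mult bounded_fn_add bounded_fn_const)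

lemma smooth_bounded_add:
  "smooth_with bounded_fn f \<Longrightarrow> smooth_with bounded_fn h \<Longrightarrow> smooth_with bounded_fn (\<lambda>x. f x + h x)"
  by (rule smooth_with_add) (auto intro: bounded_fn_add)

lemma smooth_bounded_const: "smooth_with bounded_fn (\<lambda>x. c)"
  by (rule smooth_with_const) (rule bounded_fn_const)

lemma smooth_bounded_power: "smooth_with bounded_fn f \<Longrightarrow> smooth_with bounded_fn (\<lambda>x. f x ^ n)"
  by (induction n) (auto intro: smooth_bounded_mult smooth_bounded_const)

text \<open>Derivative of w^{-k}, needed to differentiate 1/w repeatedly.\<close>
lemma has_vector_derivative_inverse_power:
  fixes w :: "real \<Rightarrow> complex"
  assumes "(w has_vector_derivative w') (at x)" "w x \<noteq> 0"
  shows "((\<lambda>x. inverse (w x) ^ k) has_vector_derivative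
    (- of_nat k * w' * inverse (w x) ^ (k + 1))) (at x)"
proof -
  have inv: "((\<lambda>x. inverse (w x)) has_vector_derivative (- (inverse (w x) * w' * inverse (w x)))) (at x)"
    using Deriv.has_derivative_inverse[OF assms(2) assms(1)[unfolded has_vector_derivative_def]]
    unfolding has_vector_derivative_def by (simp add: algebra_simps)
  show ?thesis
  proof (induction k)
    case (Suc k)
    have "((\<lambda>x. inverse (w x) * inverse (w x) ^ k) has_vector_derivative
        (inverse (w x) * (- of_nat k * w' * inverse (w x) ^ (k + 1))
         + (- (inverse (w x) * w' * inverse (w x))) * inverse (w x) ^ k)) (at x)"
      by (rule has_vector_derivative_mult[OF inv Suc])
    then show ?case by (simp add: algebra_simps)
  qed simp
qed

text \<open>Inverting a smooth function w with bounded derivatives and |w| \<ge> 1: the derivatives of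
  1/w are finite sums of terms h \<cdot> w^{-k} with h smooth with bounded derivatives.\<close>
definition sum_inverse_powers ::
    "(real \<Rightarrow> complex) \<Rightarrow> ((real \<Rightarrow> complex) \<times> nat) list \<Rightarrow> real \<Rightarrow> complex" where
  "sum_inverse_powers w L x = (\<Sum>(h, k) \<leftarrow> L. h x * inverse (w x) ^ k)"

lemma sum_inverse_powers_simps [simp]:
  "sum_inverse_powers w [] x = 0"
  "sum_inverse_powers w ((h, k) # L) x = h x * inverse (w x) ^ k + sum_inverse_powers w L x"
  by (auto simp: sum_inverse_powers_def)

definition deriv_inverse_powers ::
    "(real \<Rightarrow> complex) \<Rightarrow> ((real \<Rightarrow> complex) \<times> nat) list \<Rightarrow> ((real \<Rightarrow> complex) \<times> nat) list" where
  "deriv_inverse_powers w L = concat (map (\<lambda>(h, k).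
     [(sderiv bounded_fn h, k), (\<lambda>x. - of_nat k * h x * sderiv bounded_fn w x, k + 1)]) L)"

lemma deriv_inverse_powers_simps [simp]:
  "deriv_inverse_powers w [] = []"
  "deriv_inverse_powers w ((h, k) # L) = (sderiv bounded_fn h, k)
     # (\<lambda>x. - of_nat k * h x * sderiv bounded_fn w x, k + 1) # deriv_inverse_powers w L"
  by (auto simp: deriv_inverse_powers_def)

context
  fixes w :: "real \<Rightarrow> complex"
  assumes w_smooth: "smooth_with bounded_fn w" and w_ge_1: "\<And>x. 1 \<le> norm (w x)"
begin

lemma sum_inverse_powers_bounded:
  "\<forall>(h, k) \<in> set L. smooth_with bounded_fn h \<Longrightarrow> bounded_fn (sum_inverse_powers w L)"
proof (induction L)
  case (Cons hk L)
  obtain h k where hk: "hk = (h, k)" by force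
  have "norm (inverse (w x) ^ k) \<le> 1" for x
    using w_ge_1[of x] by (simp add: norm_power norm_inverse power_le_one inverse_le_1_iff)
  then have "bounded_fn (\<lambda>x. h x * inverse (w x) ^ k)"
    using Cons.prems hk smooth_withD(1) by (intro bounded_fn_mult) (auto simp: bounded_fn_def)
  then show ?case using Cons hk by (simp add: bounded_fn_add)
qed (simp add: bounded_fn_const sum_inverse_powers_def[abs_def])

lemma sum_inverse_powers_deriv:
  "\<forall>(h, k) \<in> set L. smooth_with bounded_fn h \<Longrightarrow>
    (sum_inverse_powers w L has_vector_derivative sum_inverse_powers w (deriv_inverse_powers w L) x) (at x)"
proof (induction L)
  case (Cons hk L)
  obtain h k where hk: "hk = (h, k)" by force
  have h: "(h has_vector_derivative sderiv bounded_fn h x) (at x)"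
    using Cons.prems hk smooth_withD(2) by auto
  have "w x \<noteq> 0" using w_ge_1[of x] by auto
  then have "((\<lambda>x. h x * inverse (w x) ^ k + sum_inverse_powers w L x) has_vector_derivative
      (h x * (- of_nat k * sderiv bounded_fn w x * inverse (w x) ^ (k + 1))
        + sderiv bounded_fn h x * inverse (w x) ^ k) + sum_inverse_powers w (deriv_inverse_powers w L) x) (at x)"
    using Cons by (intro has_vector_derivative_add has_vector_derivative_mult h
        has_vector_derivative_inverse_power smooth_withD(2)[OF w_smooth]) auto
  then show ?case using hk by (simp add: algebra_simps)
qed (simp add: sum_inverse_powers_def[abs_def])

lemma deriv_inverse_powers_smooth:
  "\<forall>(h, k) \<in> set L. smooth_with bounded_fn h \<Longrightarrow>
    \<forall>(h, k) \<in> set (deriv_inverse_powers w L). smooth_with bounded_fn h"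
proof (induction L)
  case (Cons hk L)
  obtain h k where hk: "hk = (h, k)" by force
  have h: "smooth_with bounded_fn h" using Cons.prems hk by auto
  have "smooth_with bounded_fn (\<lambda>x. (- of_nat k) * h x * sderiv bounded_fn w x)"
    by (intro smooth_bounded_mult smooth_bounded_const h smooth_withD(3)[OF w_smooth])
  then show ?case using Cons hk smooth_withD(3)[OF h] by simp
qed simp

lemma smooth_bounded_inverse: "smooth_with bounded_fn (\<lambda>x. inverse (w x))"
proof (rule smooth_with_invariant[where
      P = "\<lambda>F. \<exists>L. F = sum_inverse_powers w L \<and> (\<forall>(h, k) \<in> set L. smooth_with bounded_fn h)"])
  show "\<exists>L. (\<lambda>x. inverse (w x)) = sum_inverse_powers w L \<and> (\<forall>(h, k) \<in> set L. smooth_with bounded_fn h)"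
    using smooth_bounded_const[of 1] by (intro exI[of _ "[(\<lambda>x. 1, 1)]"]) (auto simp: fun_eq_iff)
qed (use sum_inverse_powers_bounded sum_inverse_powers_deriv deriv_inverse_powers_smooth in blast)

end

definition low_part :: "real \<Rightarrow> nat \<Rightarrow> (real \<Rightarrow> complex) \<Rightarrow> real \<Rightarrow> complex" where
  "low_part lam N g x = g x / complex_of_real (1 + (norm (g x) / lam) ^ (2 * N))"

definition high_part :: "real \<Rightarrow> nat \<Rightarrow> (real \<Rightarrow> complex) \<Rightarrow> real \<Rightarrow> complex" where
  "high_part lam N g x = g x - low_part lam N g x"

lemma high_plus_low_part: "(\<lambda>x. high_part lam N g x + low_part lam N g x) = g"
  by (simp add: high_part_def)

lemma norm_low_part:
  "norm (low_part lam N g x) = norm (g x) / (1 + (norm (g x) / lam) ^ (2 * N))"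
proof -
  have "0 \<le> (norm (g x) / lam) ^ (2 * N)" by (simp add: power_mult)
  then show ?thesis unfolding low_part_def norm_divide norm_of_real by simp
qed

lemma norm_high_part:
  "norm (high_part lam N g x)
     = norm (g x) * ((norm (g x) / lam) ^ (2 * N) / (1 + (norm (g x) / lam) ^ (2 * N)))"
proof -
  define t where "t = (norm (g x) / lam) ^ (2 * N)"
  have t: "0 \<le> t" by (simp add: t_def power_mult)
  have "high_part lam N g x = g x * (1 - inverse (complex_of_real (1 + t)))"
    unfolding high_part_def low_part_def t_def[symmetric] by (simp add: divide_inverse algebra_simps)
  also have "1 - inverse (complex_of_real (1 + t)) = complex_of_real (1 - inverse (1 + t))"
    by (simp only: of_real_diff of_real_inverse of_real_1)
  also have "1 - inverse (1 + t) = t / (1 + t)"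
    using t by (simp add: field_simps)
  finally have eq: "high_part lam N g x = g x * complex_of_real (t / (1 + t))" .
  show ?thesis unfolding t_def[symmetric] eq norm_mult norm_of_real using t by simp
qed

lemma schwartz_low_high_part:
  assumes g: "schwartz g" and lam: "lam > 0"
  shows "schwartz (low_part lam N g)" "schwartz (high_part lam N g)"
proof -
  define W where "W x = complex_of_real (1 + (norm (g x) / lam) ^ (2 * N))" for x
  have g_bounded: "smooth_with bounded_fn g"
    using g rapid_decay_bounded smooth_with_mono unfolding schwartz_iff_smooth_rapid by blast
  have "smooth_with bounded_fn (\<lambda>x. 1 + (complex_of_real (1 / lam\<^sup>2) * (g x * cnj (g x))) ^ N)"
    by (intro smooth_bounded_add smooth_bounded_const smooth_bounded_power smooth_bounded_mult
        g_bounded smooth_with_cnj) (auto simp: bounded_fn_def)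
  moreover have "(\<lambda>x. 1 + (complex_of_real (1 / lam\<^sup>2) * (g x * cnj (g x))) ^ N) = W"
  proof
    fix x
    have "g x * cnj (g x) = complex_of_real ((norm (g x))\<^sup>2)"
      using complex_norm_square[of "g x"] by simp
    then show "1 + (complex_of_real (1 / lam\<^sup>2) * (g x * cnj (g x))) ^ N = W x"
      by (simp add: W_def power_divide power_mult)
  qed
  ultimately have "smooth_with bounded_fn W" by simp
  moreover have "1 \<le> norm (W x)" for x
  proof -
    have "0 \<le> (norm (g x) / lam) ^ (2 * N)" by (simp add: power_mult)
    then show ?thesis unfolding W_def norm_of_real by simp
  qed
  ultimately have inv: "smooth_with bounded_fn (\<lambda>x. inverse (W x))"
    by (rule smooth_bounded_inverse)
  have "low_part lam N g = (\<lambda>x. g x * inverse (W x))"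
    by (simp add: fun_eq_iff low_part_def W_def divide_inverse)
  then show "schwartz (low_part lam N g)" using schwartz_mult_bounded[OF g inv] by simp
  have "high_part lam N g = (\<lambda>x. g x * (1 + (-1) * inverse (W x)))"
    by (simp add: fun_eq_iff high_part_def low_part_def W_def divide_inverse algebra_simps)
  moreover have "smooth_with bounded_fn (\<lambda>x. 1 + (-1) * inverse (W x))"
    by (intro smooth_bounded_add smooth_bounded_mult smooth_bounded_const inv)
  ultimately show "schwartz (high_part lam N g)" using schwartz_mult_bounded[OF g] by simp
qed

text \<open>Measurability of the functions involved: locally integrable functions are limits of
  integrable truncations, Schwartz functions are continuous.\<close>
lemma locally_integrable_measurable:
  assumes "locally_integrable f"
  shows "f \<in> borel_measurable lebesgue"
proof (rule borel_measurable_LIMSEQ_metric)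
  fix n :: nat
  have "set_integrable lebesgue {-real n..real n} f"
    using assms unfolding locally_integrable_def by auto
  then show "(\<lambda>x. indicator {-real n..real n} x *\<^sub>R f x) \<in> borel_measurable lebesgue"
    unfolding set_integrable_def by (rule borel_measurable_integrable)
next
  fix x :: real
  obtain m :: nat where m: "\<bar>x\<bar> \<le> real m" using real_nat_ceiling_ge by blast
  have "\<forall>n\<ge>m. indicator {-real n..real n} x *\<^sub>R f x = f x"
    using m by (auto simp: indicator_def)
  then show "(\<lambda>n. indicator {-real n..real n} x *\<^sub>R f x) \<longlonglongrightarrow> f x"
    by (intro tendsto_eventually) (auto simp: eventually_sequentially)
qed

lemma schwartz_measurable: "schwartz g \<Longrightarrow> g \<in> borel_measurable lebesgue"
proof -
  assume "schwartz g"
  then obtain D where "D 0 = g" "\<And>n x. (D n has_vector_derivative D (Suc n) x) (at x)"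
    unfolding schwartz_def by blast
  then have "continuous_on UNIV g"
    by (metis continuous_at_imp_continuous_on has_vector_derivative_continuous)
  then have "g \<in> borel_measurable lborel" by (simp add: borel_measurable_continuous_onI)
  then show ?thesis by (rule measurable_completion)
qed

lemma distrib_fun_real:
  "s \<ge> 0 \<Longrightarrow> distrib_fun f (ennreal s) = emeasure lebesgue {x. s < norm (f x)}"
  unfolding distrib_fun_def by (simp add: ennreal_less_iff)

lemma level_set_measurable:
  "f \<in> borel_measurable lebesgue \<Longrightarrow> {x. s < ennreal (norm (f x))} \<in> sets lebesgue"
proof -
  assume "f \<in> borel_measurable lebesgue"
  then have "{x \<in> space lebesgue. s < ennreal (norm (f x))} \<in> sets lebesgue" by measurable
  then show ?thesis by simp
qed

lemma distrib_fun_antimono: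
  "f \<in> borel_measurable lebesgue \<Longrightarrow> s \<le> s' \<Longrightarrow> distrib_fun f s' \<le> distrib_fun f s"
  unfolding distrib_fun_def by (rule emeasure_mono) (auto simp: level_set_measurable)

lemma distrib_fun_le_of_rearrangement_less:
  assumes "f \<in> borel_measurable lebesgue" "rearrangement f t < s"
  shows "distrib_fun f s \<le> ennreal t"
proof -
  from assms(2) obtain s0 where "s0 < s" "distrib_fun f s0 \<le> ennreal t"
    unfolding rearrangement_def by (auto simp: Inf_less_iff)
  then show ?thesis using distrib_fun_antimono[OF assms(1), of s0 s] by (meson less_imp_le order_trans)
qed

lemma distrib_fun_sum_le:
  assumes ae: "AE x in lebesgue. norm (f x) \<le> norm (f1 x) + norm (f2 x)"
    and f1: "f1 \<in> borel_measurable lebesgue" and f2: "f2 \<in> borel_measurable lebesgue"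
    and s: "s1 \<ge> 0" "s2 \<ge> 0"
  shows "distrib_fun f (ennreal (s1 + s2)) \<le> distrib_fun f1 (ennreal s1) + distrib_fun f2 (ennreal s2)"
proof -
  have sets: "{x. s1 < norm (f1 x)} \<in> sets lebesgue" "{x. s2 < norm (f2 x)} \<in> sets lebesgue"
    using level_set_measurable[OF f1, of "ennreal s1"] level_set_measurable[OF f2, of "ennreal s2"] s
    by (simp_all add: ennreal_less_iff)
  have "distrib_fun f (ennreal (s1 + s2)) = emeasure lebesgue {x. s1 + s2 < norm (f x)}"
    using s by (intro distrib_fun_real) simp
  also have "\<dots> \<le> emeasure lebesgue ({x. s1 < norm (f1 x)} \<union> {x. s2 < norm (f2 x)})"
    by (rule emeasure_mono_AE) (use ae sets in \<open>auto elim!: eventually_mono\<close>)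
  also have "\<dots> \<le> emeasure lebesgue {x. s1 < norm (f1 x)} + emeasure lebesgue {x. s2 < norm (f2 x)}"
    by (rule emeasure_subadditive[OF sets])
  also have "\<dots> = distrib_fun f1 (ennreal s1) + distrib_fun f2 (ennreal s2)"
    using s by (simp add: distrib_fun_real)
  finally show ?thesis .
qed

lemma ennreal_le_of_forall_gt:
  assumes "c \<ge> 0" "\<And>t. c < t \<Longrightarrow> d \<le> ennreal t"
  shows "d \<le> ennreal c"
proof (rule ennreal_le_epsilon)
  fix e :: real assume "0 < e"
  then show "d \<le> ennreal c + ennreal e"
    using assms(1) assms(2)[of "c + e"] by (simp add: ennreal_plus)
qed

lemma rearrangement_le_of_weak_norm:
  assumes "weak_norm f q \<le> ennreal M" "t > 0" "M \<ge> 0"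
  shows "rearrangement f t \<le> ennreal (M / t powr recip q)"
proof -
  have pos: "t powr recip q > 0" using assms(2) by simp
  have "ennreal (t powr recip q) * rearrangement f t \<le> ennreal M"
    using assms(1,2) unfolding weak_norm_def by (meson SUP_upper greaterThan_iff order_trans)
  also have "ennreal M = ennreal (t powr recip q) * ennreal (M / t powr recip q)"
    using pos assms(3) by (simp add: ennreal_mult[symmetric])
  finally show ?thesis using pos by (subst (asm) ennreal_mult_le_mult_iff) auto
qed

lemma distrib_fun_le_of_weak_norm:
  assumes f: "f \<in> borel_measurable lebesgue" and weak: "weak_norm f q \<le> ennreal M"
    and b: "recip q = b" "b > 0" and s: "s > 0" and M: "M \<ge> 0"
  shows "distrib_fun f (ennreal s) \<le> ennreal ((M / s) powr (1 / b))"
proof (rule ennreal_le_of_forall_gt)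
  fix t assume t: "(M / s) powr (1 / b) < t"
  have t0: "t > 0" using t by (meson le_less_trans powr_ge_zero)
  have "M / s = ((M / s) powr (1 / b)) powr b"
    using b M s by (cases "M = 0") (auto simp: powr_powr)
  also have "\<dots> < t powr b" using t b(2) by (intro powr_less_mono2) auto
  finally have "M / t powr b < s" using s t0 by (simp add: divide_less_eq mult.commute)
  then have "rearrangement f t < ennreal s"
    using rearrangement_le_of_weak_norm[OF weak t0 M] b s by (simp add: ennreal_lessI le_less_trans)
  then show "distrib_fun f (ennreal s) \<le> ennreal t"
    by (rule distrib_fun_le_of_rearrangement_less[OF f])
qed simp

lemma distrib_fun_zero_of_weak_norm_infinite:
  assumes f: "f \<in> borel_measurable lebesgue" and weak: "weak_norm f q \<le> ennreal M"
    and b: "recip q = 0" and s: "s > M" and M: "M \<ge> 0"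
  shows "distrib_fun f (ennreal s) = 0"
proof -
  have "distrib_fun f (ennreal s) \<le> ennreal 0"
  proof (rule ennreal_le_of_forall_gt)
    fix t :: real assume t: "0 < t"
    have "rearrangement f t \<le> ennreal M"
      using rearrangement_le_of_weak_norm[OF weak t M] b t by simp
    also have "\<dots> < ennreal s" using s M by (intro ennreal_lessI) auto
    finally show "distrib_fun f (ennreal s) \<le> ennreal t"
      by (rule distrib_fun_le_of_rearrangement_less[OF f])
  qed simp
  then show ?thesis by simp
qed

lemma weak_norm_le_of_distrib_fun:
  assumes b: "recip q = b" "b > 0" and M: "M > 0"
    and d: "\<And>s. s > 0 \<Longrightarrow> distrib_fun f (ennreal s) \<le> ennreal ((M / s) powr (1 / b))"
  shows "weak_norm f q \<le> ennreal M"
  unfolding weak_norm_def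
proof (rule SUP_least)
  fix t :: real assume "t \<in> {0<..}"
  then have t: "t > 0" by simp
  define s where "s = M / t powr b"
  have s0: "s > 0" using M t by (simp add: s_def)
  have "(M / s) powr (1 / b) = t" using b t M by (simp add: s_def powr_powr)
  then have "distrib_fun f (ennreal s) \<le> ennreal t" using d[OF s0] by simp
  then have "rearrangement f t \<le> ennreal s" unfolding rearrangement_def by (intro Inf_lower) simp
  then have "ennreal (t powr recip q) * rearrangement f t \<le> ennreal (t powr b) * ennreal s"
    using b by (simp add: mult_left_mono)
  also have "\<dots> = ennreal M" using t M by (simp add: s_def ennreal_mult[symmetric])
  finally show "ennreal (t powr recip q) * rearrangement f t \<le> ennreal M" .
qed

text \<open>A weak norm 0 means f^* = 0, which is independent of the exponent.\<close>
lemma weak_norm_zero: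
  assumes "weak_norm f q \<le> 0"
  shows "weak_norm f q' = 0"
proof -
  have "rearrangement f t = 0" if t: "t > 0" for t
  proof -
    have "ennreal (t powr recip q) * rearrangement f t \<le> 0"
      using assms t unfolding weak_norm_def by (meson SUP_upper greaterThan_iff order_trans)
    moreover have "ennreal (t powr recip q) \<noteq> 0" using t by simp
    ultimately show ?thesis by simp
  qed
  then show ?thesis unfolding weak_norm_def by simp
qed

lemma Lp_norm_finite:
  assumes "p \<noteq> \<infinity>" "(\<integral>\<^sup>+ x. ennreal (norm (h x) powr enn2real p) \<partial>lebesgue) = ennreal I" "I \<ge> 0"
  shows "Lp_norm h p = ennreal (I powr (1 / enn2real p))"
  using assms unfolding Lp_norm_def by (simp add: Let_def)

lemma Lp_norm_le_of_pointwise: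
  assumes p: "p \<noteq> \<infinity>" "enn2real p > 0" and g: "g \<in> borel_measurable lebesgue" and c: "c \<ge> 0"
    and pointwise: "\<And>x. norm (h x) powr enn2real p \<le> c * norm (g x) powr e"
    and I: "(\<integral>\<^sup>+ x. ennreal (norm (g x) powr e) \<partial>lebesgue) = ennreal I" "I \<ge> 0"
  shows "Lp_norm h p \<le> ennreal ((c * I) powr (1 / enn2real p))"
proof -
  let ?J = "\<integral>\<^sup>+ x. ennreal (norm (h x) powr enn2real p) \<partial>lebesgue"
  have "?J \<le> (\<integral>\<^sup>+ x. ennreal c * ennreal (norm (g x) powr e) \<partial>lebesgue)"
    using pointwise c by (intro nn_integral_mono) (simp add: ennreal_mult[symmetric])
  also have "\<dots> = ennreal (c * I)" using g I c by (simp add: nn_integral_cmult ennreal_mult)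
  finally have le: "?J \<le> ennreal (c * I)" .
  then obtain J where J: "?J = ennreal J" "J \<ge> 0"
    by (metis ennreal_cases ennreal_neq_top neq_top_trans)
  have "J \<le> c * I" using le J c I(2) by (simp add: ennreal_le_iff)
  then have "J powr (1 / enn2real p) \<le> (c * I) powr (1 / enn2real p)"
    using J p by (intro powr_mono2) auto
  then show ?thesis using Lp_norm_finite[OF p(1) J] by simp
qed

lemma Lp_norm_infinity_le: "(\<And>x. norm (h x) \<le> c) \<Longrightarrow> Lp_norm h \<infinity> \<le> ennreal c"
  unfolding Lp_norm_def by (auto intro!: Inf_lower AE_I2 ennreal_leI)

lemma Lp_norm_zero:
  assumes p: "p \<noteq> \<infinity>" and g: "g \<in> borel_measurable lebesgue" and e: "e > 0"
    and I: "(\<integral>\<^sup>+ x. ennreal (norm (g x) powr e) \<partial>lebesgue) = 0"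
  shows "Lp_norm g p = 0"
proof -
  have "AE x in lebesgue. ennreal (norm (g x) powr e) = 0"
    using I g by (subst (asm) nn_integral_0_iff_AE) auto
  then have "AE x in lebesgue. g x = 0" by eventually_elim (use e in auto)
  then have "AE x in lebesgue. ennreal (norm (g x) powr enn2real p) = 0"
    by eventually_elim auto
  then have "(\<integral>\<^sup>+ x. ennreal (norm (g x) powr enn2real p) \<partial>lebesgue) = 0"
    using g by (subst nn_integral_0_iff_AE) auto
  then have "(\<integral>\<^sup>+ x. ennreal (norm (g x) powr enn2real p) \<partial>lebesgue) = ennreal 0" by simp
  from Lp_norm_finite[OF p this] show ?thesis by simp
qed

text \<open>Elementary inequalities for w \<ge> 0: the factor of the high part behaves like w^{2N+1}
  near 0 and like w near \<infinity>; the factor of the low part like w near 0 and is \<le> 1.\<close>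
lemma high_factor_powr_le:
  fixes w e0 e :: real
  assumes "w \<ge> 0" "0 < e0" "e0 < e" "real (2*N+1) * e0 \<ge> e"
  shows "(w * (w^(2*N)/(1+w^(2*N)))) powr e0 \<le> w powr e"
proof (cases "w \<ge> 1")
  case True
  have pw: "0 \<le> w^(2*N)" using assms(1) by simp
  have d: "0 < 1 + w^(2*N)" using pw by linarith
  have h: "w^(2*N)/(1+w^(2*N)) \<le> 1" by (subst pos_divide_le_eq[OF d]) simp
  have "(w * (w^(2*N)/(1+w^(2*N)))) powr e0 \<le> w powr e0"
    using assms h by (intro powr_mono2) (auto simp: mult_left_le simp del: times_divide_eq_right)
  also have "\<dots> \<le> w powr e" using True assms by (intro powr_mono) auto
  finally show ?thesis .
next
  case False
  show ?thesis
  proof (cases "w = 0")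
    case True thus ?thesis using assms by simp
  next
    case w0: False
    hence wp: "w > 0" using assms by simp
    have pw: "0 \<le> w^(2*N)" using assms(1) by simp
    have d: "0 < 1 + w^(2*N)" using pw by linarith
    have h: "w^(2*N)/(1+w^(2*N)) \<le> w^(2*N)" using pw by (subst pos_divide_le_eq[OF d]) (simp add: algebra_simps)
    have "(w * (w^(2*N)/(1+w^(2*N)))) powr e0 \<le> (w * w^(2*N)) powr e0"
      using assms h wp by (intro powr_mono2 mult_left_mono) auto
    also have "(w * w^(2*N)) = w powr (real (2*N+1))" using wp
      by (simp add: powr_realpow[symmetric] powr_add)
    also have "(w powr (real (2*N+1))) powr e0 = w powr (real (2*N+1) * e0)" by (simp add: powr_powr)
    also have "\<dots> \<le> w powr e" using False wp assms by (intro powr_mono') auto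
    finally show ?thesis .
  qed
qed

lemma low_factor_powr_le:
  fixes w e1 e :: real
  assumes "w \<ge> 0" "0 < e" "e < e1" "N \<ge> 1"
  shows "(w / (1+w^(2*N))) powr e1 \<le> w powr e"
proof (cases "w \<ge> 1")
  case True
  have "w \<le> w^(2*N)" using True assms(4)
    by (metis le_add2 mult_2 order.trans power_increasing power_one_right)
  hence h: "w / (1+w^(2*N)) \<le> 1" using assms(1) by (simp add: divide_le_eq)
  have "(w / (1+w^(2*N))) powr e1 \<le> 1 powr e1"
    using assms h by (intro powr_mono2) auto
  also have "\<dots> \<le> w powr e" using True assms using ge_one_powr_ge_zero by auto
  finally show ?thesis .
next
  case False
  have pw: "0 \<le> w^(2*N)" using assms(1) by simp
  have d: "0 < 1 + w^(2*N)" using pw by linarith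
  have h: "w / (1+w^(2*N)) \<le> w" using assms(1) pw by (subst pos_divide_le_eq[OF d]) (simp add: algebra_simps)
  have "(w / (1+w^(2*N))) powr e1 \<le> w powr e1" using assms h by (intro powr_mono2) auto
  also have "\<dots> \<le> w powr e" using False assms by (intro powr_mono') auto
  finally show ?thesis .
qed

lemma low_factor_le_one:
  fixes w :: real
  assumes "w \<ge> 0" "N \<ge> 1"
  shows "w / (1+w^(2*N)) \<le> 1"
proof (cases "w \<ge> 1")
  case True
  have "w \<le> w^(2*N)" using True assms(2)
    by (metis le_add2 mult_2 order.trans power_increasing power_one_right)
  thus ?thesis using assms(1) by (simp add: divide_le_eq)
next
  case False
  thus ?thesis using assms(1) by (simp add: divide_le_eq) (smt (verit) zero_le_power)
qed

lemma norm_high_part_powr_le: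
  assumes "lam > 0" "0 < e0" "e0 < e" "real (2 * N + 1) * e0 \<ge> e"
  shows "norm (high_part lam N g x) powr e0 \<le> lam powr (e0 - e) * norm (g x) powr e"
proof -
  define w where "w = norm (g x) / lam"
  have y: "norm (g x) = lam * w" and w: "w \<ge> 0" using assms(1) by (simp_all add: w_def)
  have "norm (high_part lam N g x) powr e0 = lam powr e0 * (w * (w ^ (2 * N) / (1 + w ^ (2 * N)))) powr e0"
    unfolding norm_high_part w_def[symmetric] y using assms(1) w
    by (subst powr_mult[symmetric]) (auto simp: mult.assoc)
  also have "\<dots> \<le> lam powr e0 * w powr e"
    using high_factor_powr_le[OF w assms(2-4)] by (simp add: mult_left_mono)
  also have "\<dots> = lam powr (e0 - e) * norm (g x) powr e"
    unfolding y using assms(1) w by (simp add: powr_mult powr_diff)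
  finally show ?thesis .
qed

lemma norm_low_part_powr_le:
  assumes "lam > 0" "0 < e" "e < e1" "N \<ge> 1"
  shows "norm (low_part lam N g x) powr e1 \<le> lam powr (e1 - e) * norm (g x) powr e"
proof -
  define w where "w = norm (g x) / lam"
  have y: "norm (g x) = lam * w" and w: "w \<ge> 0" using assms(1) by (simp_all add: w_def)
  have "norm (low_part lam N g x) powr e1 = lam powr e1 * (w / (1 + w ^ (2 * N))) powr e1"
    unfolding norm_low_part w_def[symmetric] y using assms(1) w by (simp add: powr_mult powr_divide)
  also have "\<dots> \<le> lam powr e1 * w powr e"
    using low_factor_powr_le[OF w assms(2-4)] by (simp add: mult_left_mono)
  also have "\<dots> = lam powr (e1 - e) * norm (g x) powr e"
    unfolding y using assms(1) w by (simp add: powr_mult powr_diff)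
  finally show ?thesis .
qed

lemma norm_low_part_le:
  assumes "lam > 0" "N \<ge> 1"
  shows "norm (low_part lam N g x) \<le> lam"
proof -
  define w where "w = norm (g x) / lam"
  have y: "norm (g x) = lam * w" and w: "w \<ge> 0" using assms(1) by (simp_all add: w_def)
  have "norm (low_part lam N g x) = lam * (w / (1 + w ^ (2 * N)))"
    unfolding norm_low_part w_def[symmetric] y by simp
  also have "\<dots> \<le> lam" using low_factor_le_one[OF w assms(2)] assms(1) by (intro mult_left_le) auto
  finally show ?thesis .
qed

lemma exponent_cases:
  assumes "p \<noteq> 0"
  obtains "p = \<infinity>" "recip p = 0" | e where "e > 0" "p = ennreal e" "recip p = 1 / e"
proof (cases p)
  case (real e)
  with assms have "e > 0" by auto
  then show ?thesis using real that(2) by (simp add: recip_def inverse_ennreal divide_inverse)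
qed (use that(1) in \<open>simp add: recip_def\<close>)

lemma Lp_norm_high_part:
  assumes g: "g \<in> borel_measurable lebesgue" and lam: "lam > 0"
    and I: "(\<integral>\<^sup>+ x. ennreal (norm (g x) powr (1 / a)) \<partial>lebesgue) = ennreal I" "I > 0"
    and p0: "p0 \<noteq> 0" "p0 \<noteq> \<infinity>" and a: "0 < a" "a < recip p0" "recip p0 \<le> real (2 * N + 1) * a"
  shows "Lp_norm (high_part lam N g) p0 \<le> ennreal (lam powr (1 - recip p0 / a) * I powr recip p0)"
  using p0(1)
proof (cases rule: exponent_cases)
  case (2 e0)
  have "a < 1 / e0" "1 / e0 \<le> real (2 * N + 1) * a"
    using a(2,3) unfolding 2(3) by simp_all
  then have e: "e0 < 1 / a" "real (2 * N + 1) * e0 \<ge> 1 / a"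
    using a(1) 2(1) by (simp_all add: field_simps)
  have "Lp_norm (high_part lam N g) p0 \<le> ennreal ((lam powr (e0 - 1 / a) * I) powr (1 / e0))"
    using Lp_norm_le_of_pointwise[OF p0(2) _ g _ _ I(1)] norm_high_part_powr_le[OF lam _ e] 2 lam I
    by simp
  also have "(lam powr (e0 - 1 / a) * I) powr (1 / e0) = lam powr (1 - recip p0 / a) * I powr recip p0"
    unfolding 2(3) using 2(1) lam I a(1) by (simp add: powr_mult powr_powr field_simps)
  finally show ?thesis .
qed (use p0 in simp)

lemma Lp_norm_low_part:
  assumes g: "g \<in> borel_measurable lebesgue" and lam: "lam > 0"
    and I: "(\<integral>\<^sup>+ x. ennreal (norm (g x) powr (1 / a)) \<partial>lebesgue) = ennreal I" "I > 0"
    and p1: "p1 \<noteq> 0" and a: "recip p1 < a" and N: "N \<ge> 1"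
  shows "Lp_norm (low_part lam N g) p1 \<le> ennreal (lam powr (1 - recip p1 / a) * I powr recip p1)"
  using p1
proof (cases rule: exponent_cases)
  case 1
  then show ?thesis using Lp_norm_infinity_le[OF norm_low_part_le[OF lam N]] lam I by simp
next
  case (2 e1)
  have "1 / e1 < a" using a unfolding 2(3) .
  moreover from this have "0 < a" using 2(1) by (smt (verit) divide_pos_pos)
  ultimately have e: "0 < 1 / a" "1 / a < e1"
    using 2(1) by (simp_all add: field_simps)
  have "Lp_norm (low_part lam N g) p1 \<le> ennreal ((lam powr (e1 - 1 / a) * I) powr (1 / e1))"
    using Lp_norm_le_of_pointwise[where p = p1 and h = "low_part lam N g", OF _ _ g _ _ I(1)]
      norm_low_part_powr_le[OF lam e N] 2 lam I
    by simp
  also have "(lam powr (e1 - 1 / a) * I) powr (1 / e1) = lam powr (1 - recip p1 / a) * I powr recip p1"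
  proof -
    have "(e1 - 1 / a) / e1 = 1 - (1 / e1) / a" using 2(1) by (simp add: diff_divide_distrib mult.commute)
    then show ?thesis unfolding 2(3) using 2(1) lam I by (simp add: powr_mult powr_powr)
  qed
  finally show ?thesis .
qed

lemma recip_nonneg: "recip q \<ge> 0"
  by (simp add: recip_def)

lemma recip_le_2:
  assumes "1 / 2 \<le> q"
  shows "recip q \<le> 2"
proof (cases q)
  case (real r)
  have half: "(1 / 2 :: ennreal) = ennreal (1 / 2)" using divide_ennreal[of 1 2] by simp
  have "ennreal (1 / 2) \<le> ennreal r" using assms unfolding real half .
  then have "1 / 2 \<le> r" using real(1) by (simp only: ennreal_le_iff)
  then show ?thesis using real by (simp add: recip_def inverse_ennreal field_simps)
qed (simp add: recip_def)

lemma recip_inverse_ennreal: "r > 0 \<Longrightarrow> recip (inverse (ennreal r)) = r"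
  by (simp add: recip_def inverse_ennreal)

lemma balancing_height:
  fixes K0 K1 I s \<theta> a0 a1 b0 b1 \<mu> :: real
  assumes pos: "K0 > 0" "K1 > 0" "I > 0" "s > 0" "0 < \<theta>" "\<theta> < 1" "\<mu> > 0"
    and exps: "a0 - a1 = \<mu>" "b0 - b1 = \<mu>" "a1 \<ge> 0" "b1 \<ge> 0"
    and a_def: "a = (1 - \<theta>) * a0 + \<theta> * a1" and b_def: "b = (1 - \<theta>) * b0 + \<theta> * b1"
    and u_def: "u = 2 * K0 powr (1 - \<theta>) * K1 powr \<theta> * I powr a / s"
  obtains lam where "lam > 0"
    "2 * K0 * (lam powr (1 - a0 / a) * I powr a0) / s = 2 powr \<theta> * u powr (b0 / b)"
    "2 * K1 * (lam powr (1 - a1 / a) * I powr a1) / s = 2 powr (\<theta> - 1) * u powr (b1 / b)"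
proof -
  have a: "a > 0" and b: "b > 0" unfolding a_def b_def using pos exps
    by (smt (verit) mult_nonneg_nonneg mult_pos_pos)+
  have u: "u > 0" unfolding u_def using pos by simp
  text \<open>The height is \<lambda> = L^{a/\<mu>}; this L equates the logarithms of both sides below.\<close>
  define L where "L = (K0 / K1) * I powr \<mu> * u powr (- \<mu> / b) / 2"
  define lam where "lam = L powr (a / \<mu>)"
  have L: "L > 0" unfolding L_def using pos u by simp
  have lam: "lam > 0" unfolding lam_def using L by simp
  have ln_u: "ln u = ln 2 + (1 - \<theta>) * ln K0 + \<theta> * ln K1 + a * ln I - ln s"
    unfolding u_def using pos by (simp add: ln_mult ln_div)
  define r where "r = \<mu> / b"
  have ln_L: "ln L = ln K0 - ln K1 + \<mu> * ln I - r * ln u - ln 2"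
    unfolding L_def r_def using pos u by (simp add: ln_mult ln_div)
  have ln_lam: "ln lam = (a / \<mu>) * ln L" unfolding lam_def using L by simp
  have a_eq: "a = a0 - \<theta> * \<mu>" "a = a1 + (1 - \<theta>) * \<mu>"
    unfolding a_def using exps by (simp_all add: algebra_simps)
  have "(1 - a0 / a) * (a / \<mu>) = (a - a0) / \<mu>" "(1 - a1 / a) * (a / \<mu>) = (a - a1) / \<mu>"
    using a pos(7) by (simp_all add: field_simps)
  moreover have "(a - a0) / \<mu> = - \<theta>" using pos(7) a_eq(1) by simp
  moreover have "(a - a1) / \<mu> = 1 - \<theta>" using pos(7) a_eq(2) by simp
  ultimately have "(1 - a0 / a) * (a / \<mu>) = - \<theta>" "(1 - a1 / a) * (a / \<mu>) = 1 - \<theta>"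
    by simp_all
  then have lam_exps: "(1 - a0 / a) * ln lam = - \<theta> * ln L" "(1 - a1 / a) * ln lam = (1 - \<theta>) * ln L"
    unfolding ln_lam by (metis mult.assoc)+
  have b_ratio: "b0 / b = 1 + \<theta> * r" "b1 / b = 1 - (1 - \<theta>) * r"
    using b exps unfolding b_def r_def by (simp_all add: field_simps)
  define B0 B1 where "B0 = lam powr (1 - a0 / a) * I powr a0" and "B1 = lam powr (1 - a1 / a) * I powr a1"
  have B: "B0 > 0" "B1 > 0" unfolding B0_def B1_def using lam pos by simp_all
  have ln_B: "ln B0 = - \<theta> * ln L + a0 * ln I" "ln B1 = (1 - \<theta>) * ln L + a1 * ln I"
    unfolding B0_def B1_def using lam pos lam_exps by (simp_all add: ln_mult)
  have "ln (2 * K0 * B0 / s) = ln 2 + ln K0 + ln B0 - ln s"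
    and "ln (2 * K1 * B1 / s) = ln 2 + ln K1 + ln B1 - ln s"
    using pos B by (simp_all add: ln_mult ln_div)
  then have "ln (2 * K0 * B0 / s) = \<theta> * ln 2 + (b0 / b) * ln u"
    and "ln (2 * K1 * B1 / s) = (\<theta> - 1) * ln 2 + (b1 / b) * ln u"
    unfolding b_ratio using ln_B ln_L ln_u a_eq exps(1) by algebra+
  then have "ln (2 * K0 * B0 / s) = ln (2 powr \<theta> * u powr (b0 / b))"
    and "ln (2 * K1 * B1 / s) = ln (2 powr (\<theta> - 1) * u powr (b1 / b))"
    using u by (simp_all add: ln_mult)
  then have "2 * K0 * B0 / s = 2 powr \<theta> * u powr (b0 / b)"
    and "2 * K1 * B1 / s = 2 powr (\<theta> - 1) * u powr (b1 / b)"
    using pos B u by simp_all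
  then show ?thesis using lam that unfolding B0_def B1_def by blast
qed

lemma high_level_bound:
  fixes u b b0 \<mu> \<theta> :: real
  assumes "u > 0" "b > 0" "b0 \<ge> \<mu>" "\<mu> > 0" "0 < \<theta>" "\<theta> < 1"
  shows "(2 powr \<theta> * u powr (b0 / b)) powr (1 / b0) \<le> 2 powr (1 / \<mu>) * u powr (1 / b)"
proof -
  have "\<theta> / b0 \<le> 1 / \<mu>" using assms by (simp add: frac_le)
  then have "2 powr (\<theta> / b0) \<le> 2 powr (1 / \<mu>)" by simp
  moreover have "(2 powr \<theta> * u powr (b0 / b)) powr (1 / b0) = 2 powr (\<theta> / b0) * u powr (1 / b)"
    using assms by (simp add: powr_mult powr_powr)
  ultimately show ?thesis using assms(1) by simp
qed

lemma low_level_bound: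
  fixes u b b1 \<theta> :: real
  assumes "u > 0" "b > 0" "b1 > 0" "\<theta> < 1"
  shows "(2 powr (\<theta> - 1) * u powr (b1 / b)) powr (1 / b1) \<le> u powr (1 / b)"
proof -
  have "(\<theta> - 1) / b1 \<le> 0" using assms by (simp add: divide_nonpos_pos)
  then have "2 powr ((\<theta> - 1) / b1) \<le> 1" using powr_mono[of "(\<theta> - 1) / b1" 0 2] by simp
  moreover have "(2 powr (\<theta> - 1) * u powr (b1 / b)) powr (1 / b1) = 2 powr ((\<theta> - 1) / b1) * u powr (1 / b)"
    using assms by (simp add: powr_mult powr_powr)
  ultimately show ?thesis using assms(1) by (simp add: mult_left_le_one_le)
qed

text \<open>Adding the two bounds yields the constant 4^{1 + 1/\<mu>}; here b \<le> 2 since q(\<theta>) \<ge> 1/2.\<close>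
lemma sum_level_bounds:
  fixes u b \<mu> :: real
  assumes "0 < b" "b \<le> 2" "\<mu> > 0" "u > 0"
  shows "2 powr (1 / \<mu>) * u powr (1 / b) + u powr (1 / b) \<le> (4 powr (1 + 1 / \<mu>) * u) powr (1 / b)"
proof -
  have "1 \<le> 2 powr (1 / \<mu>)" using assms by (intro ge_one_powr_ge_zero) auto
  then have "2 powr (1 / \<mu>) + 1 \<le> 2 * 2 powr (1 / \<mu>)" by simp
  also have "\<dots> = 4 powr ((1 + 1 / \<mu>) / 2)"
    by (simp add: powr_add powr_powr[symmetric])
  also have "\<dots> \<le> 4 powr ((1 + 1 / \<mu>) / b)" using assms by (intro powr_mono divide_left_mono) auto
  also have "\<dots> = (4 powr (1 + 1 / \<mu>)) powr (1 / b)" by (simp add: powr_powr)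
  finally have "(2 powr (1 / \<mu>) + 1) * u powr (1 / b) \<le> (4 powr (1 + 1 / \<mu>)) powr (1 / b) * u powr (1 / b)"
    by (simp add: mult_right_mono)
  then show ?thesis using assms by (simp add: powr_mult distrib_right)
qed

definition weak_type ::
    "((real \<Rightarrow> complex) \<Rightarrow> real \<Rightarrow> complex) \<Rightarrow> ennreal \<Rightarrow> ennreal \<Rightarrow> real \<Rightarrow> bool" where
  "weak_type T p q K \<longleftrightarrow> (\<forall>g. schwartz g \<longrightarrow> weak_norm (T g) q \<le> ennreal K * Lp_norm g p)"

lemma weak_type_apply:
  assumes "weak_type T p q K" "K \<ge> 0" "schwartz h" "Lp_norm h p \<le> ennreal B" "B \<ge> 0"
  shows "weak_norm (T h) q \<le> ennreal (K * B)"
proof -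
  have "weak_norm (T h) q \<le> ennreal K * Lp_norm h p"
    using assms(1,3) unfolding weak_type_def by blast
  also have "\<dots> \<le> ennreal K * ennreal B" using assms(4) by (rule mult_left_mono) simp
  finally show ?thesis using assms(2,5) by (simp add: ennreal_mult)
qed

text \<open>A weak-type bound with constant 0, or a function of norm 0, forces T g = 0 a.e.,
  so T g vanishes in every weak norm.\<close>
lemma weak_norm_vanishes:
  assumes "weak_type T p q K" "schwartz g" "K = 0 \<or> Lp_norm g p = 0"
  shows "weak_norm (T g) q' = 0"
  using assms unfolding weak_type_def by (intro weak_norm_zero[of _ q]) auto

lemma distrib_fun_sublinear:
  assumes T: "sublinear_op T" and g: "schwartz g1" "schwartz g2"
    and meas: "T g1 \<in> borel_measurable lebesgue" "T g2 \<in> borel_measurable lebesgue"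
    and s: "s1 \<ge> 0" "s2 \<ge> 0"
  shows "distrib_fun (T (\<lambda>x. g1 x + g2 x)) (ennreal (s1 + s2))
    \<le> distrib_fun (T g1) (ennreal s1) + distrib_fun (T g2) (ennreal s2)"
proof (rule distrib_fun_sum_le[OF _ meas s])
  show "AE x in lebesgue. norm (T (\<lambda>x. g1 x + g2 x) x) \<le> norm (T g1 x) + norm (T g2 x)"
    using T g unfolding sublinear_op_def by blast
qed

text \<open>The smoothing order N of the split must make the high part small enough near 0.\<close>
lemma smoothing_order_exists:
  assumes "0 < a" "a < a0"
  obtains N :: nat where "N \<ge> 1" "a0 \<le> real (2 * N + 1) * a"
proof -
  define N where "N = nat \<lceil>a0 / a\<rceil>"
  have ratio: "a0 / a \<le> real N" unfolding N_def by (rule real_nat_ceiling_ge)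
  moreover have "1 < a0 / a" using assms by simp
  ultimately have "N \<ge> 1" by linarith
  moreover have "a0 \<le> real N * a" using ratio assms(1) by (simp add: pos_divide_le_eq)
  moreover have "real N * a \<le> real (2 * N + 1) * a" using assms(1) by (intro mult_right_mono) auto
  ultimately show ?thesis using that by simp
qed

lemma balanced_decomposition:
  assumes type0: "weak_type T p0 q0 K0" and type1: "weak_type T p1 q1 K1" and K: "K0 > 0" "K1 > 0"
    and p: "p0 \<noteq> 0" "p0 \<noteq> \<infinity>" "p1 \<noteq> 0"
    and mu: "recip p0 - recip p1 = \<mu>" "recip q0 - recip q1 = \<mu>" "\<mu> > 0"
    and \<theta>: "0 < \<theta>" "\<theta> < 1" and g: "schwartz g"
    and a_def: "a = (1 - \<theta>) * recip p0 + \<theta> * recip p1"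
    and b_def: "b = (1 - \<theta>) * recip q0 + \<theta> * recip q1"
    and I: "(\<integral>\<^sup>+ x. ennreal (norm (g x) powr (1 / a)) \<partial>lebesgue) = ennreal I" "I > 0"
    and s: "s > 0" and u_def: "u = 2 * K0 powr (1 - \<theta>) * K1 powr \<theta> * I powr a / s"
  obtains g1 g2 B0 B1 where "schwartz g1" "schwartz g2" "(\<lambda>x. g1 x + g2 x) = g" "B0 \<ge> 0" "B1 \<ge> 0"
    "weak_norm (T g1) q0 \<le> ennreal (K0 * B0)" "weak_norm (T g2) q1 \<le> ennreal (K1 * B1)"
    "2 * (K0 * B0) / s = 2 powr \<theta> * u powr (recip q0 / b)"
    "2 * (K1 * B1) / s = 2 powr (\<theta> - 1) * u powr (recip q1 / b)"
proof -
  have "a = recip p1 + (1 - \<theta>) * \<mu>" "a = recip p0 - \<theta> * \<mu>"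
    unfolding a_def mu(1)[symmetric] by (simp_all add: algebra_simps)
  moreover have "(1 - \<theta>) * \<mu> > 0" "\<theta> * \<mu> > 0" using \<theta> mu(3) by simp_all
  ultimately have a: "recip p1 < a" "a < recip p0" "0 < a" using recip_nonneg[of p1] by linarith+
  obtain lam where lam: "lam > 0"
    and bal0: "2 * K0 * (lam powr (1 - recip p0 / a) * I powr recip p0) / s = 2 powr \<theta> * u powr (recip q0 / b)"
    and bal1: "2 * K1 * (lam powr (1 - recip p1 / a) * I powr recip p1) / s = 2 powr (\<theta> - 1) * u powr (recip q1 / b)"
    by (rule balancing_height[OF K I(2) s \<theta> mu(3) mu(1,2) recip_nonneg recip_nonneg a_def b_def u_def])
  obtain N where N: "N \<ge> 1" "recip p0 \<le> real (2 * N + 1) * a"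
    using smoothing_order_exists[OF a(3,2)] by blast
  have gm: "g \<in> borel_measurable lebesgue" by (rule schwartz_measurable[OF g])
  have parts: "schwartz (high_part lam N g)" "schwartz (low_part lam N g)"
    using schwartz_low_high_part[OF g lam] by simp_all
  have "Lp_norm (high_part lam N g) p0 \<le> ennreal (lam powr (1 - recip p0 / a) * I powr recip p0)"
    by (rule Lp_norm_high_part[OF gm lam I p(1,2) a(3,2) N(2)])
  then have W0: "weak_norm (T (high_part lam N g)) q0 \<le> ennreal (K0 * (lam powr (1 - recip p0 / a) * I powr recip p0))"
    using K by (intro weak_type_apply[OF type0 _ parts(1)]) auto
  have "Lp_norm (low_part lam N g) p1 \<le> ennreal (lam powr (1 - recip p1 / a) * I powr recip p1)"
    by (rule Lp_norm_low_part[OF gm lam I p(3) a(1) N(1)])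
  then have W1: "weak_norm (T (low_part lam N g)) q1 \<le> ennreal (K1 * (lam powr (1 - recip p1 / a) * I powr recip p1))"
    using K by (intro weak_type_apply[OF type1 _ parts(2)]) auto
  show ?thesis
    by (rule that[OF parts high_plus_low_part _ _ W0 W1]) (use bal0 bal1 in \<open>simp_all only: mult.assoc\<close>, simp_all)
qed

lemma distrib_fun_high_piece:
  assumes f: "f \<in> borel_measurable lebesgue" and weak: "weak_norm f q \<le> ennreal M" and M: "M \<ge> 0"
    and s: "s > 0" and bal: "2 * M / s = 2 powr \<theta> * u powr (recip q / b)"
    and u: "u > 0" and b: "b > 0" and q: "recip q \<ge> \<mu>" "\<mu> > 0" and \<theta>: "0 < \<theta>" "\<theta> < 1"
  shows "distrib_fun f (ennreal (s / 2)) \<le> ennreal (2 powr (1 / \<mu>) * u powr (1 / b))"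
proof -
  have "distrib_fun f (ennreal (s / 2)) \<le> ennreal ((M / (s / 2)) powr (1 / recip q))"
    by (rule distrib_fun_le_of_weak_norm[OF f weak refl]) (use q s M in simp_all)
  also have "M / (s / 2) = 2 * M / s" by simp
  also have "\<dots> = 2 powr \<theta> * u powr (recip q / b)" by (rule bal)
  also have "ennreal (\<dots> powr (1 / recip q)) \<le> ennreal (2 powr (1 / \<mu>) * u powr (1 / b))"
    by (intro ennreal_leI high_level_bound[OF u b q \<theta>])
  finally show ?thesis .
qed

text \<open>For the low part the exponent b1 may vanish (q1 = \<infinity>); then the level s/2 exceeds
  the L^\<infinity> bound and the level set is null.\<close>
lemma distrib_fun_low_piece:
  assumes f: "f \<in> borel_measurable lebesgue" and weak: "weak_norm f q \<le> ennreal M" and M: "M \<ge> 0"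
    and s: "s > 0" and bal: "2 * M / s = 2 powr (\<theta> - 1) * u powr (recip q / b)"
    and u: "u > 0" and b: "b > 0" and \<theta>: "\<theta> < 1"
  shows "distrib_fun f (ennreal (s / 2)) \<le> ennreal (u powr (1 / b))"
proof (cases "recip q = 0")
  case True
  have "2 powr (\<theta> - 1) < (1 :: real)" using powr_less_mono[of "\<theta> - 1" 0 2] \<theta> by simp
  then have "M < s / 2" using bal s u unfolding True by (simp add: field_simps)
  then show ?thesis using distrib_fun_zero_of_weak_norm_infinite[OF f weak True] M by simp
next
  case False
  then have q: "recip q > 0" using recip_nonneg[of q] by simp
  have "distrib_fun f (ennreal (s / 2)) \<le> ennreal ((M / (s / 2)) powr (1 / recip q))"
    by (rule distrib_fun_le_of_weak_norm[OF f weak refl q]) (use s M in simp_all)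
  also have "M / (s / 2) = 2 * M / s" by simp
  also have "\<dots> = 2 powr (\<theta> - 1) * u powr (recip q / b)" by (rule bal)
  also have "ennreal (\<dots> powr (1 / recip q)) \<le> ennreal (u powr (1 / b))"
    by (intro ennreal_leI low_level_bound[OF u b q \<theta>])
  finally show ?thesis .
qed

lemma level_set_estimate:
  assumes T: "sublinear_op T" "\<And>h. schwartz h \<Longrightarrow> locally_integrable (T h)"
    and type0: "weak_type T p0 q0 K0" and type1: "weak_type T p1 q1 K1" and K: "K0 > 0" "K1 > 0"
    and p: "p0 \<noteq> 0" "p0 \<noteq> \<infinity>" "p1 \<noteq> 0"
    and mu: "recip p0 - recip p1 = \<mu>" "recip q0 - recip q1 = \<mu>" "\<mu> > 0"
    and \<theta>: "0 < \<theta>" "\<theta> < 1" and g: "schwartz g"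
    and a_def: "a = (1 - \<theta>) * recip p0 + \<theta> * recip p1"
    and b_def: "b = (1 - \<theta>) * recip q0 + \<theta> * recip q1"
    and I: "(\<integral>\<^sup>+ x. ennreal (norm (g x) powr (1 / a)) \<partial>lebesgue) = ennreal I" "I > 0"
    and s: "s > 0" and u_def: "u = 2 * K0 powr (1 - \<theta>) * K1 powr \<theta> * I powr a / s"
  shows "distrib_fun (T g) (ennreal s) \<le> ennreal (2 powr (1 / \<mu>) * u powr (1 / b) + u powr (1 / b))"
proof -
  have "b = recip q1 + (1 - \<theta>) * \<mu>" unfolding b_def mu(2)[symmetric] by (simp add: algebra_simps)
  moreover have "(1 - \<theta>) * \<mu> > 0" using \<theta> mu(3) by simp
  ultimately have b: "b > 0" using recip_nonneg[of q1] by linarith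
  have q0: "recip q0 \<ge> \<mu>" using mu(2) recip_nonneg[of q1] by linarith
  have u: "u > 0" unfolding u_def using K I s by simp
  obtain g1 g2 B0 B1 where g12: "schwartz g1" "schwartz g2" "(\<lambda>x. g1 x + g2 x) = g"
    and B: "B0 \<ge> 0" "B1 \<ge> 0"
    and weak: "weak_norm (T g1) q0 \<le> ennreal (K0 * B0)" "weak_norm (T g2) q1 \<le> ennreal (K1 * B1)"
    and bal: "2 * (K0 * B0) / s = 2 powr \<theta> * u powr (recip q0 / b)"
      "2 * (K1 * B1) / s = 2 powr (\<theta> - 1) * u powr (recip q1 / b)"
    by (rule balanced_decomposition[OF type0 type1 K p mu \<theta> g a_def b_def I s u_def])
  have meas: "T g1 \<in> borel_measurable lebesgue" "T g2 \<in> borel_measurable lebesgue"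
    using T(2) g12 locally_integrable_measurable by blast+
  have "distrib_fun (T g) (ennreal s)
      \<le> distrib_fun (T g1) (ennreal (s / 2)) + distrib_fun (T g2) (ennreal (s / 2))"
    using distrib_fun_sublinear[OF T(1) g12(1,2) meas, of "s / 2" "s / 2"] s
    unfolding g12(3) field_sum_of_halves by simp
  also have "\<dots> \<le> ennreal (2 powr (1 / \<mu>) * u powr (1 / b)) + ennreal (u powr (1 / b))"
    using K B
    by (intro add_mono distrib_fun_high_piece[OF meas(1) weak(1) _ s bal(1) u b q0 mu(3) \<theta>]
        distrib_fun_low_piece[OF meas(2) weak(2) _ s bal(2) u b \<theta>(2)]) simp_all
  finally show ?thesis by (simp add: ennreal_plus)
qed

lemma weak_norm_interpolation_finite:
  assumes T: "sublinear_op T" "\<And>h. schwartz h \<Longrightarrow> locally_integrable (T h)"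
    and type0: "weak_type T p0 q0 K0" and type1: "weak_type T p1 q1 K1" and K: "K0 > 0" "K1 > 0"
    and p: "p0 \<noteq> 0" "p0 \<noteq> \<infinity>" "p1 \<noteq> 0" and q0: "recip q0 \<le> 2"
    and mu: "recip p0 - recip p1 = \<mu>" "recip q0 - recip q1 = \<mu>" "\<mu> > 0"
    and \<theta>: "0 < \<theta>" "\<theta> < 1" and g: "schwartz g"
    and a_def: "a = (1 - \<theta>) * recip p0 + \<theta> * recip p1"
    and b_def: "b = (1 - \<theta>) * recip q0 + \<theta> * recip q1"
    and I: "(\<integral>\<^sup>+ x. ennreal (norm (g x) powr (1 / a)) \<partial>lebesgue) = ennreal I" "I > 0"
  shows "weak_norm (T g) (inverse (ennreal b))
    \<le> ennreal (2 * 4 powr (1 + 1 / \<mu>) * K0 powr (1 - \<theta>) * K1 powr \<theta> * I powr a)"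
proof -
  have "b = recip q0 - \<theta> * \<mu>" "b = recip q1 + (1 - \<theta>) * \<mu>"
    unfolding b_def mu(2)[symmetric] by (simp_all add: algebra_simps)
  moreover have "0 < \<theta> * \<mu>" "0 < (1 - \<theta>) * \<mu>" using \<theta> mu(3) by simp_all
  ultimately have b: "0 < b" "b \<le> 2" using q0 recip_nonneg[of q1] by linarith+
  show ?thesis
  proof (rule weak_norm_le_of_distrib_fun[OF recip_inverse_ennreal[OF b(1)] b(1)])
    fix s :: real assume s: "s > 0"
    define u where "u = 2 * K0 powr (1 - \<theta>) * K1 powr \<theta> * I powr a / s"
    have "distrib_fun (T g) (ennreal s) \<le> ennreal (2 powr (1 / \<mu>) * u powr (1 / b) + u powr (1 / b))"
      by (rule level_set_estimate[OF T type0 type1 K p mu \<theta> g a_def b_def I s u_def])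
    also have "\<dots> \<le> ennreal ((4 powr (1 + 1 / \<mu>) * u) powr (1 / b))"
      using K I s by (intro ennreal_leI sum_level_bounds[OF b mu(3)]) (simp add: u_def)
    also have "4 powr (1 + 1 / \<mu>) * u = 2 * 4 powr (1 + 1 / \<mu>) * K0 powr (1 - \<theta>) * K1 powr \<theta> * I powr a / s"
      by (simp add: u_def)
    finally show "distrib_fun (T g) (ennreal s)
      \<le> ennreal ((2 * 4 powr (1 + 1 / \<mu>) * K0 powr (1 - \<theta>) * K1 powr \<theta> * I powr a / s) powr (1 / b))" .
  qed (use K I in simp)
qed

lemma weak_type_interpolation:
  assumes T: "sublinear_op T" "\<And>h. schwartz h \<Longrightarrow> locally_integrable (T h)"
    and type0: "weak_type T p0 q0 K0" and type1: "weak_type T p1 q1 K1" and K: "K0 \<ge> 0" "K1 \<ge> 0"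
    and p: "p0 \<noteq> 0" "p0 \<noteq> \<infinity>" "p1 \<noteq> 0" and q0: "recip q0 \<le> 2"
    and mu: "recip p0 - recip p1 = \<mu>" "recip q0 - recip q1 = \<mu>" "\<mu> > 0"
    and \<theta>: "0 < \<theta>" "\<theta> < 1" and g: "schwartz g"
  shows "weak_norm (T g) (inverse (ennreal ((1 - \<theta>) * recip q0 + \<theta> * recip q1)))
    \<le> ennreal (2 * 4 powr (1 + 1 / \<mu>) * K0 powr (1 - \<theta>) * K1 powr \<theta>)
      * Lp_norm g (inverse (ennreal ((1 - \<theta>) * recip p0 + \<theta> * recip p1)))"
    (is "weak_norm (T g) ?q \<le> ennreal ?C * Lp_norm g ?p")
proof -
  define a where "a = (1 - \<theta>) * recip p0 + \<theta> * recip p1"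
  have "a = recip p1 + (1 - \<theta>) * \<mu>" unfolding a_def mu(1)[symmetric] by (simp add: algebra_simps)
  moreover have "(1 - \<theta>) * \<mu> > 0" using \<theta> mu(3) by simp
  ultimately have a: "a > 0" using recip_nonneg[of p1] by linarith
  define J where "J = (\<integral>\<^sup>+ x. ennreal (norm (g x) powr (1 / a)) \<partial>lebesgue)"
  have p_eq: "?p \<noteq> \<infinity>" "enn2real ?p = 1 / a"
    using a unfolding a_def[symmetric] by (simp_all add: inverse_ennreal inverse_eq_divide)
  consider (degenerate) "K0 = 0 \<or> K1 = 0 \<or> J = 0" | (infinite) "K0 > 0" "K1 > 0" "J = \<infinity>"
    | (finite) I where "K0 > 0" "K1 > 0" "J = ennreal I" "I > 0"
    using K by (cases J) (auto simp: order.order_iff_strict)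
  then show ?thesis
  proof cases
    case degenerate
    have "J = 0 \<Longrightarrow> Lp_norm g p0 = 0"
      using Lp_norm_zero[OF p(2) schwartz_measurable[OF g], of "1 / a"] a unfolding J_def by simp
    then have "weak_norm (T g) ?q = 0"
      using degenerate weak_norm_vanishes[OF type0 g] weak_norm_vanishes[OF type1 g] by blast
    then show ?thesis by simp
  next
    case infinite
    then have "Lp_norm g ?p = \<infinity>"
      using p_eq unfolding Lp_norm_def J_def by (simp add: Let_def)
    then show ?thesis using infinite by (simp add: ennreal_mult_top)
  next
    case finite
    then have "Lp_norm g ?p = ennreal (I powr a)"
      using Lp_norm_finite[OF p_eq(1), of g I] p_eq(2) a unfolding J_def by simp
    moreover have "weak_norm (T g) ?q \<le> ennreal (?C * I powr a)"
      using weak_norm_interpolation_finite[OF T type0 type1 finite(1,2) p q0 mu \<theta> g a_def refl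
          finite(3)[unfolded J_def] finite(4)]
      by (simp add: mult.assoc)
    ultimately show ?thesis using finite by (simp add: ennreal_mult)
  qed
qed

theorem mainTheorem16:
  fixes p0 p1 q0 q1 :: ennreal and \<mu> :: real
  assumes "1/2 < p0" "p0 < p1" "1/2 \<le> q0" "1/2 \<le> q1"
    and "recip p0 - recip p1 = \<mu>" "recip q0 - recip q1 = \<mu>" "\<mu> > 0"
  shows "\<exists>C::real. C > 0 \<and>
    (\<forall>(T :: (real \<Rightarrow> complex) \<Rightarrow> (real \<Rightarrow> complex)) (K0::real) (K1::real).
       sublinear_op T \<longrightarrow>
       (\<forall>g. schwartz g \<longrightarrow> locally_integrable (T g)) \<longrightarrow>
       K0 \<ge> 0 \<longrightarrow> K1 \<ge> 0 \<longrightarrow>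
       (\<forall>g. schwartz g \<longrightarrow> weak_norm (T g) q0 \<le> ennreal K0 * Lp_norm g p0) \<longrightarrow>
       (\<forall>g. schwartz g \<longrightarrow> weak_norm (T g) q1 \<le> ennreal K1 * Lp_norm g p1) \<longrightarrow>
       (\<forall>\<theta>::real. 0 < \<theta> \<longrightarrow> \<theta> < 1 \<longrightarrow>
          (\<forall>g. schwartz g \<longrightarrow>
             weak_norm (T g) (inverse (ennreal ((1 - \<theta>) * recip q0 + \<theta> * recip q1)))
               \<le> ennreal (C * K0 powr (1 - \<theta>) * K1 powr \<theta>)
                  * Lp_norm g (inverse (ennreal ((1 - \<theta>) * recip p0 + \<theta> * recip p1))))))"
proof -
  have "p0 < \<infinity>" using assms(2) by (rule less_le_trans) simp
  then have p: "p0 \<noteq> 0" "p0 \<noteq> \<infinity>" "p1 \<noteq> 0" using assms(1,2) by auto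
  have q0: "recip q0 \<le> 2" by (rule recip_le_2[OF assms(3)])
  show ?thesis
  proof (intro exI[of _ "2 * 4 powr (1 + 1 / \<mu>)"] conjI allI impI)
    fix T :: "(real \<Rightarrow> complex) \<Rightarrow> real \<Rightarrow> complex" and K0 K1 \<theta> :: real and g
    assume T: "sublinear_op T" "\<forall>g. schwartz g \<longrightarrow> locally_integrable (T g)"
      and K: "K0 \<ge> 0" "K1 \<ge> 0"
      and "\<forall>g. schwartz g \<longrightarrow> weak_norm (T g) q0 \<le> ennreal K0 * Lp_norm g p0"
      and "\<forall>g. schwartz g \<longrightarrow> weak_norm (T g) q1 \<le> ennreal K1 * Lp_norm g p1"
      and \<theta>: "0 < \<theta>" "\<theta> < 1" and g: "schwartz g"
    then have "weak_type T p0 q0 K0" "weak_type T p1 q1 K1" unfolding weak_type_def by blast+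
    with T K \<theta> g show "weak_norm (T g) (inverse (ennreal ((1 - \<theta>) * recip q0 + \<theta> * recip q1)))
        \<le> ennreal (2 * 4 powr (1 + 1 / \<mu>) * K0 powr (1 - \<theta>) * K1 powr \<theta>)
          * Lp_norm g (inverse (ennreal ((1 - \<theta>) * recip p0 + \<theta> * recip p1)))"
      by (intro weak_type_interpolation[OF _ _ _ _ _ _ p q0 assms(5-7)]) auto
  qed simp
qed

end
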